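(* Let $n\ge2$, $p\in S_k$, and $\pi:\{1,\dots,k\}\to\{1,\dots,n\}$. Suppose there exist $i<j$ with $p_i>p_j$ and $\pi(i)\le\pi(j)$. Then no $w\in\widetilde{S}_n$ contains an instance of $p$ with strand assignment $\pi$.
   Context: An affine permutation of size $n$ is a bijection $w:\mathbb{Z}\to\mathbb{Z}$ with $w(i+n)=w(i)+n$ for all $i$ and $w(1)+\cdots+w(n)=\binom{n+1}{2}$; $\widetilde{S}_n$ is the group of these. For $p\in S_k$, an instance of $p$ in $w$ is a sequence of integers $i_1<\cdots<i_k$ such that $w(i_1),\dots,w(i_k)$ are in the same relative order as $p_1,\dots,p_k$; $w$ contains $p$ if such an instance exists. The strand assignment of an instance is the function $\pi:\{1,\dots,k\}\to\{1,\dots,n\}$ with $\pi(m)=j$ iff $i_m\equiv q\pmod n$, where $q\in\{1,\dots,n\}$ is the position such that $w(q)$ is the $j$-th smallest of $w(1),\dots,w(n)$. *)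

theory Defs
  imports "HOL-Combinatorics.Permutations"
begin

definition affine_perm :: "nat \<Rightarrow> (int \<Rightarrow> int) \<Rightarrow> bool" where
  "affine_perm n w \<longleftrightarrow> bij w \<and> (\<forall>i. w (i + int n) = w i + int n)
     \<and> (\<Sum>i\<in>{1..int n}. w i) = int ((n + 1) choose 2)"

definition is_instance :: "(int \<Rightarrow> int) \<Rightarrow> nat \<Rightarrow> (nat \<Rightarrow> nat) \<Rightarrow> (nat \<Rightarrow> int) \<Rightarrow> bool" where
  "is_instance w k p idx \<longleftrightarrow>
     (\<forall>a\<in>{1..k}. \<forall>b\<in>{1..k}. a < b \<longrightarrow> idx a < idx b) \<and>
     (\<forall>a\<in>{1..k}. \<forall>b\<in>{1..k}. w (idx a) < w (idx b) \<longleftrightarrow> p a < p b)"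

definition residue_rep :: "nat \<Rightarrow> int \<Rightarrow> int" where
  "residue_rep n i = ((i - 1) mod int n) + 1"

definition strand_rank :: "nat \<Rightarrow> (int \<Rightarrow> int) \<Rightarrow> int \<Rightarrow> nat" where
  "strand_rank n w q = card {r\<in>{1..int n}. w r \<le> w q}"

definition has_strand_assignment ::
  "nat \<Rightarrow> (int \<Rightarrow> int) \<Rightarrow> nat \<Rightarrow> (nat \<Rightarrow> int) \<Rightarrow> (nat \<Rightarrow> nat) \<Rightarrow> bool" where
  "has_strand_assignment n w k idx \<pi> \<longleftrightarrow>
     (\<forall>m\<in>{1..k}. \<pi> m = strand_rank n w (residue_rep n (idx m)))"

end

theory Submission
  imports Defs
begin

text \<open>Write an instance position x as q + a n with q its residue in {1..n}. By periodicity,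
  w x = w q + a n, and a position further to the right never lies in an earlier window.
  So if the strand of x is not above the strand of y, i.e. w q \<le> w q', and x < y, then
  w x \<le> w y: two entries on weakly increasing strands can never form an inversion.\<close>

lemma periodic_add_mult:
  assumes periodic: "\<forall>i. w (i + int n) = w i + int n"
  shows "w (i + a * int n) = w i + a * int n"
proof (induction a rule: int_induct[where k = 0])
  case base
  show ?case by simp
next
  case (step1 a)
  have "w (i + (a + 1) * int n) = w ((i + a * int n) + int n)"
    by (simp add: algebra_simps)
  also have "\<dots> = w (i + a * int n) + int n"
    using periodic by blast
  finally show ?case
    using step1 by (simp add: algebra_simps)
next
  case (step2 a)
  have "w (i + a * int n) = w ((i + (a - 1) * int n) + int n)"
    by (simp add: algebra_simps)
  also have "\<dots> = w (i + (a - 1) * int n) + int n"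
    using periodic by blast
  finally show ?case
    using step2 by (simp add: algebra_simps)
qed

lemma residue_rep_mem:
  assumes "n > 0"
  shows "residue_rep n i \<in> {1..int n}"
  using assms by (simp add: residue_rep_def pos_mod_bound pos_mod_sign add1_zle_eq)

lemma residue_rep_decomp: "i = residue_rep n i + ((i - 1) div int n) * int n"
  unfolding residue_rep_def using div_mult_mod_eq[of "i - 1" "int n"] by (simp add: algebra_simps)

lemma periodic_eq_residue_rep:
  assumes "\<forall>i. w (i + int n) = w i + int n"
  shows "w i = w (residue_rep n i) + ((i - 1) div int n) * int n"
  using periodic_add_mult[OF assms] residue_rep_decomp by metis

lemma periodic_le_if_residue_le:
  assumes "\<forall>i. w (i + int n) = w i + int n"
    and "x \<le> y"
    and "w (residue_rep n x) \<le> w (residue_rep n y)"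
  shows "w x \<le> w y"
proof -
  have "(x - 1) div int n \<le> (y - 1) div int n"
    using assms(2) by (cases "n = 0") (simp_all add: zdiv_mono1)
  then have "(x - 1) div int n * int n \<le> (y - 1) div int n * int n"
    by (simp add: mult_right_mono)
  with assms(3) show ?thesis
    using periodic_eq_residue_rep[OF assms(1)] by (metis add_mono)
qed

lemma le_if_strand_rank_le:
  assumes "strand_rank n w q \<le> strand_rank n w q'" and "q \<in> {1..int n}"
  shows "w q \<le> w q'"
proof (rule ccontr)
  assume "\<not> w q \<le> w q'"
  with assms(2) have "{r\<in>{1..int n}. w r \<le> w q'} \<subset> {r\<in>{1..int n}. w r \<le> w q}"
    by auto
  then have "card {r\<in>{1..int n}. w r \<le> w q'} < card {r\<in>{1..int n}. w r \<le> w q}"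
    by (intro psubset_card_mono) (auto intro: finite_subset[of _ "{1..int n}"])
  with assms(1) show False
    unfolding strand_rank_def by simp
qed

theorem mainTheorem5:
  fixes n k :: nat and p \<pi> :: "nat \<Rightarrow> nat"
  assumes "n \<ge> 2"
    and "p permutes {1..k}"
    and "\<pi> ` {1..k} \<subseteq> {1..n}"
    and "\<exists>i\<in>{1..k}. \<exists>j\<in>{1..k}. i < j \<and> p i > p j \<and> \<pi> i \<le> \<pi> j"
  shows "\<not> (\<exists>w idx. affine_perm n w \<and> is_instance w k p idx
              \<and> has_strand_assignment n w k idx \<pi>)"
proof
  assume "\<exists>w idx. affine_perm n w \<and> is_instance w k p idx
              \<and> has_strand_assignment n w k idx \<pi>"
  then obtain w idx where affine: "affine_perm n w" and inst: "is_instance w k p idx"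
    and strands: "has_strand_assignment n w k idx \<pi>" by blast
  obtain i j where ij: "i \<in> {1..k}" "j \<in> {1..k}" "i < j" "p i > p j" "\<pi> i \<le> \<pi> j"
    using assms(4) by blast
  have periodic: "\<forall>i. w (i + int n) = w i + int n"
    using affine unfolding affine_perm_def by blast
  have positions: "idx i < idx j" and inversion: "w (idx j) < w (idx i)"
    using inst ij unfolding is_instance_def by blast+
  have "strand_rank n w (residue_rep n (idx i)) \<le> strand_rank n w (residue_rep n (idx j))"
    using strands ij unfolding has_strand_assignment_def by auto
  then have "w (residue_rep n (idx i)) \<le> w (residue_rep n (idx j))"
    using le_if_strand_rank_le residue_rep_mem assms(1) by simp
  then have "w (idx i) \<le> w (idx j)"
    using periodic_le_if_residue_le[OF periodic] positions by simp
  with inversion show False by simp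
qed

end
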